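(* Let $t_1,\dots,t_N\in\mathbb{C}$ be pairwise distinct, $B_1,\dots,B_N$ constant complex $M\times M$ matrices, $y$ a $\mathbb{C}^M$-valued solution of $D_xy=\sum_{i=1}^N\frac{B_i}{x-t_i}y$, and $Y_0={}^{\mathrm T}\!\left[\frac{y}{x-t_1},\dots,\frac{y}{x-t_N}\right]$. Let $\lambda\in\mathbb{C}$ and let $C$ be a path such that the Jackson integrals involved converge and $$\left[\frac{1-q^{-\lambda}t/x}{1-t/x}\,(tI-S)\,Y_0(t)\,\frac{(q^{1-\lambda}t/x)_\infty}{(qt/x)_\infty}\right]_{t\in\partial C}=0 .$$ Then $Y=E_{\lambda;C}[Y_0](x)$ (applied componentwise) satisfies $$(xI-S)D_xY=\big(q^\lambda B+[\lambda]I\big)Y,$$ and consequently $D_xY=\sum_{i=1}^N\frac{G_i}{x-t_i}Y$, where $G_i$ is the $MN\times MN$ matrix whose $i$-th block row is $[q^\lambda B_1,\dots,q^\lambda B_{i-1},\,q^\lambda B_i+[\lambda]I_M,\,q^\lambda B_{i+1},\dots,q^\lambda B_N]$ and whose other block rows are zero.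
   Context: Fix $q\in\mathbb{C}$ with $0<|q|<1$. $T_xf(x)=f(qx)$, $D_xf(x)=\frac{f(x)-f(qx)}{(1-q)x}$, $(a)_\infty=\prod_{k\ge0}(1-aq^k)$, $[\lambda]=\frac{1-q^\lambda}{1-q}$; $x^\lambda$ is a fixed branch with $T_xx^\lambda=q^\lambda x^\lambda$. $S=\mathrm{diag}(t_1I_M,\dots,t_NI_M)$; $B$ is the $MN\times MN$ block matrix all of whose block rows equal $[B_1\ \cdots\ B_N]$. Jackson integrals: $\int_0^\tau f\,d_qt=(1-q)\sum_{n\ge0}f(\tau q^n)\tau q^n$, $\int_0^{\tau\infty}f\,d_qt=(1-q)\sum_{n\in\mathbb{Z}}f(\tau q^n)\tau q^n$, $\int_{[\tau_1,\tau_2]}=\int_{[0,\tau_2]}-\int_{[0,\tau_1]}$ for $\tau_i\in\mathbb{C}\cup\mathbb{C}\infty$; a path $C$ is a formal linear combination of such intervals, integrals extended linearly. $[F(t)]_{t\in\partial[\tau_1,\tau_2]}=F(\tau_2)-F(\tau_1)$, extended linearly to paths, with $F(\tau\infty)=\lim_{n\to-\infty}F(\tau q^n)$ and $F(0)=\lim_{n\to\infty}F(\tau q^n)$. $E_{\lambda;C}[f](x)=x^\lambda\int_Cf(t)\frac{(q^{1-\lambda}t/x)_\infty}{(qt/x)_\infty}d_qt$. *)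

theory Defs
  imports "HOL-Analysis.Infinite_Products" "Jordan_Normal_Form.Matrix"
begin

definition qpoch :: "complex \<Rightarrow> complex \<Rightarrow> complex" where
  "qpoch q a = prodinf (\<lambda>k. 1 - a * q ^ k)"

text \<open>Endpoints: Fin tau stands for tau in C, Inf tau stands for tau\<infinity> (in C\<infinity>).
  A path is a formal finite linear combination  sum_j c_j [0, e_j]  of basic intervals;
  since [tau1,tau2] = [0,tau2] - [0,tau1], every formal combination of intervals is of this form.\<close>
datatype endpt = Fin complex | Inf complex

type_synonym qpath = "(complex \<times> endpt) list"

fun endpt_base :: "endpt \<Rightarrow> complex" where
  "endpt_base (Fin \<tau>) = \<tau>"
| "endpt_base (Inf \<tau>) = \<tau>"

text \<open>The q-lattice on which the Jackson integral over [0,e] samples its integrand.\<close>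
fun qlattice :: "complex \<Rightarrow> endpt \<Rightarrow> complex set" where
  "qlattice q (Fin \<tau>) = range (\<lambda>n::nat. \<tau> * q ^ n)"
| "qlattice q (Inf \<tau>) = range (\<lambda>n::int. \<tau> * q powi n)"

text \<open>Convergence of the Jackson integral over [0,e]; the bilateral sum over Z converges
  iff both the sum over n >= 0 and the sum over n < 0 converge.\<close>
fun jconv :: "complex \<Rightarrow> (complex \<Rightarrow> complex) \<Rightarrow> endpt \<Rightarrow> bool" where
  "jconv q f (Fin \<tau>) = summable (\<lambda>n. f (\<tau> * q ^ n) * (\<tau> * q ^ n))"
| "jconv q f (Inf \<tau>) = (summable (\<lambda>n. f (\<tau> * q ^ n) * (\<tau> * q ^ n)) \<and>
      summable (\<lambda>n. f (\<tau> / q ^ Suc n) * (\<tau> / q ^ Suc n)))"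

fun jint :: "complex \<Rightarrow> (complex \<Rightarrow> complex) \<Rightarrow> endpt \<Rightarrow> complex" where
  "jint q f (Fin \<tau>) = (1 - q) * (\<Sum>n. f (\<tau> * q ^ n) * (\<tau> * q ^ n))"
| "jint q f (Inf \<tau>) = (1 - q) * ((\<Sum>n. f (\<tau> * q ^ n) * (\<tau> * q ^ n)) +
      (\<Sum>n. f (\<tau> / q ^ Suc n) * (\<tau> / q ^ Suc n)))"

definition jconvP :: "complex \<Rightarrow> (complex \<Rightarrow> complex) \<Rightarrow> qpath \<Rightarrow> bool" where
  "jconvP q f C = (\<forall>(c, e) \<in> set C. jconv q f e)"

definition jintP :: "complex \<Rightarrow> (complex \<Rightarrow> complex) \<Rightarrow> qpath \<Rightarrow> complex" where
  "jintP q f C = (\<Sum>(c, e) \<leftarrow> C. c * jint q f e)"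

text \<open>[F]_{d[0,tau]} = F(tau) - F(0),  [F]_{d[0,tau\<infinity>]} = F(tau\<infinity>) - F(0), where
  F(tau\<infinity>) = lim_{n -> -\<infinity>} F(tau q^n) and F(0) = lim_{n -> \<infinity>} F(tau q^n).\<close>
fun bdefined :: "complex \<Rightarrow> (complex \<Rightarrow> complex) \<Rightarrow> endpt \<Rightarrow> bool" where
  "bdefined q F (Fin \<tau>) = convergent (\<lambda>n. F (\<tau> * q ^ n))"
| "bdefined q F (Inf \<tau>) = (convergent (\<lambda>n. F (\<tau> * q ^ n)) \<and> convergent (\<lambda>n. F (\<tau> / q ^ n)))"

fun bval :: "complex \<Rightarrow> (complex \<Rightarrow> complex) \<Rightarrow> endpt \<Rightarrow> complex" where
  "bval q F (Fin \<tau>) = F \<tau> - lim (\<lambda>n. F (\<tau> * q ^ n))"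
| "bval q F (Inf \<tau>) = lim (\<lambda>n. F (\<tau> / q ^ n)) - lim (\<lambda>n. F (\<tau> * q ^ n))"

definition bdefP :: "complex \<Rightarrow> (complex \<Rightarrow> complex) \<Rightarrow> qpath \<Rightarrow> bool" where
  "bdefP q F C = (\<forall>(c, e) \<in> set C. bdefined q F e)"

definition bdryP :: "complex \<Rightarrow> (complex \<Rightarrow> complex) \<Rightarrow> qpath \<Rightarrow> complex" where
  "bdryP q F C = (\<Sum>(c, e) \<leftarrow> C. c * bval q F e)"

text \<open>qlam stands for the fixed value q^lambda, so q^{1-lambda} = q / qlam;
  xl is the fixed branch of x^lambda.\<close>
definition qPhi :: "complex \<Rightarrow> complex \<Rightarrow> complex \<Rightarrow> complex \<Rightarrow> complex" where
  "qPhi q qlam t x = qpoch q ((q / qlam) * t / x) / qpoch q (q * t / x)"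

definition qEuler :: "complex \<Rightarrow> complex \<Rightarrow> (complex \<Rightarrow> complex) \<Rightarrow> qpath
    \<Rightarrow> (complex \<Rightarrow> complex) \<Rightarrow> complex \<Rightarrow> complex" where
  "qEuler q qlam xl C f x = xl x * jintP q (\<lambda>t. f t * qPhi q qlam t x) C"

definition Smat :: "nat \<Rightarrow> nat \<Rightarrow> (nat \<Rightarrow> complex) \<Rightarrow> complex mat" where
  "Smat M N t = mat (M * N) (M * N) (\<lambda>(r, c). if r = c then t (r div M) else 0)"

definition Bbig :: "nat \<Rightarrow> nat \<Rightarrow> (nat \<Rightarrow> complex mat) \<Rightarrow> complex mat" where
  "Bbig M N B = mat (M * N) (M * N) (\<lambda>(r, c). B (c div M) $$ (r mod M, c mod M))"

definition Gmat :: "nat \<Rightarrow> nat \<Rightarrow> (nat \<Rightarrow> complex mat) \<Rightarrow> complex \<Rightarrow> complex \<Rightarrow> nat \<Rightarrow> complex mat" where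
  "Gmat M N B qlam lamb i = mat (M * N) (M * N) (\<lambda>(r, c).
      if r div M = i then qlam * B (c div M) $$ (r mod M, c mod M) + (if r = c then lamb else 0)
      else 0)"

definition Y0vec :: "nat \<Rightarrow> nat \<Rightarrow> (nat \<Rightarrow> complex) \<Rightarrow> (complex \<Rightarrow> complex vec) \<Rightarrow> complex \<Rightarrow> complex vec" where
  "Y0vec M N t y s = vec (M * N) (\<lambda>j. y s $ (j mod M) / (s - t (j div M)))"

end

theory Submission
  imports Defs
begin

(* Write Phi(s, x) = (q^(1-lambda) s/x)_inf / (q s/x)_inf for the kernel of E_{lambda;C} and
   rho(s) = (1 - s/(q^lambda x)) / (1 - s/x).  The recursion (a)_inf = (1 - a) (q a)_inf gives
   Phi(s, q x) = rho(s) Phi(s, x) and rho(q s) Phi(q s, x) = Phi(s, x).  With these and the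
   q-difference equation for y, the integrand of the j-th row of
   (x I - S) D_x Y - (q^lambda B + [lambda] I) Y is, up to a factor independent of s, the Jackson
   derivative (F(s) - F(q s)) / ((1 - q) s) of the function F of the boundary hypothesis, and the
   Jackson integral of a Jackson derivative telescopes to [F] over the boundary of C, which
   vanishes.  Dividing the i-th block row by x - t_i gives the second form. *)

lemma qpoch_shift:
  assumes "cmod q < 1"
  shows "qpoch q a = (1 - a) * qpoch q (q * a)"
proof -
  have "summable (\<lambda>k. norm ((1 - a * q ^ k) - 1))"
    using assms by (simp add: norm_mult norm_power summable_mult summable_geometric)
  then have "convergent_prod (\<lambda>k. 1 - a * q ^ k)"
    by (intro abs_convergent_prod_imp_convergent_prod summable_imp_abs_convergent_prod)
  from has_prod_ignore_initial_segment'[OF this, of 1]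
  have "(\<lambda>k. 1 - a * q ^ k) has_prod ((1 - a) * (\<Prod>k. 1 - q * a * q ^ k))"
    by (simp add: algebra_simps)
  then show ?thesis
    unfolding qpoch_def by (rule has_prod_unique[symmetric])
qed

lemma qPhi_scale_x:
  assumes "cmod q < 1" "q \<noteq> 0" "x \<noteq> 0" "qlam \<noteq> 0" "qpoch q (s / x) \<noteq> 0"
  shows "qPhi q qlam s (q * x) = qPhi q qlam s x * ((1 - s / (qlam * x)) / (1 - s / x))"
proof -
  have num: "qpoch q (q / qlam * s / (q * x)) = (1 - s / (qlam * x)) * qpoch q (q / qlam * s / x)"
    using qpoch_shift[OF assms(1), of "s / (qlam * x)"] assms(2) by (simp add: field_simps)
  have den: "qpoch q (q * s / (q * x)) = (1 - s / x) * qpoch q (q * s / x)"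
    using qpoch_shift[OF assms(1), of "s / x"] assms(2) by simp
  show ?thesis
    unfolding qPhi_def num den using assms(5) by (simp add: field_simps)
qed

lemma qPhi_shift_t:
  assumes "cmod q < 1" "qpoch q (s / x) \<noteq> 0"
  shows "qPhi q qlam (q * s) x * ((1 - q * s / (qlam * x)) / (1 - q * s / x)) = qPhi q qlam s x"
proof -
  have num: "qpoch q (q / qlam * s / x) = (1 - q * s / (qlam * x)) * qpoch q (q / qlam * (q * s) / x)"
    using qpoch_shift[OF assms(1), of "q / qlam * s / x"] by (simp add: field_simps)
  have "qpoch q (s / x) = (1 - s / x) * ((1 - q * s / x) * qpoch q (q * (q * s) / x))"
    using qpoch_shift[OF assms(1), of "s / x"] qpoch_shift[OF assms(1), of "q * s / x"] by simp
  then have "1 - q * s / x \<noteq> 0" "qpoch q (q * (q * s) / x) \<noteq> 0"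
    using assms(2) by auto
  moreover have den: "qpoch q (q * s / x) = (1 - q * s / x) * qpoch q (q * (q * s) / x)"
    using qpoch_shift[OF assms(1), of "q * s / x"] by (simp add: field_simps)
  ultimately show ?thesis
    unfolding qPhi_def num den by (simp add: field_simps)
qed

lemma jconv_zero: "jconv q (\<lambda>s. 0) e"
  by (cases e) simp_all

lemma jint_zero: "jint q (\<lambda>s. 0) e = 0"
  by (cases e) simp_all

lemma jconv_add:
  "jconv q f e \<Longrightarrow> jconv q g e \<Longrightarrow> jconv q (\<lambda>s. f s + g s) e"
  by (cases e) (auto simp only: jconv.simps distrib_right intro!: summable_add)

lemma jint_add:
  "jconv q f e \<Longrightarrow> jconv q g e \<Longrightarrow> jint q (\<lambda>s. f s + g s) e = jint q f e + jint q g e"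
  by (cases e) (auto simp only: jconv.simps jint.simps distrib_right suminf_add[symmetric],
      simp_all only: distrib_left add_ac)

lemma jconv_cmult:
  "jconv q f e \<Longrightarrow> jconv q (\<lambda>s. a * f s) e"
  by (cases e) (auto simp only: jconv.simps mult.assoc intro!: summable_mult)

lemma jint_cmult:
  "jconv q f e \<Longrightarrow> jint q (\<lambda>s. a * f s) e = a * jint q f e"
  by (cases e) (auto simp only: jconv.simps jint.simps mult.assoc suminf_mult, simp_all add: algebra_simps)

lemma jconv_sum:
  "finite K \<Longrightarrow> \<forall>k\<in>K. jconv q (f k) e \<Longrightarrow> jconv q (\<lambda>s. \<Sum>k\<in>K. f k s) e"
  by (induction K rule: finite_induct) (auto intro: jconv_add jconv_zero)

lemma jint_sum:
  "finite K \<Longrightarrow> \<forall>k\<in>K. jconv q (f k) e \<Longrightarrow>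
    jint q (\<lambda>s. \<Sum>k\<in>K. f k s) e = (\<Sum>k\<in>K. jint q (f k) e)"
  by (induction K rule: finite_induct) (auto simp: jint_add jconv_sum jint_zero)

lemma base_power_in_qlattice:
  "endpt_base e * q ^ n \<in> qlattice q e"
  by (cases e) (auto intro: image_eqI[where x = "int n"])

lemma q_mult_in_qlattice:
  assumes "s \<in> qlattice q e" "q \<noteq> 0"
  shows "q * s \<in> qlattice q e"
proof (cases e)
  case (Fin \<tau>)
  then obtain n where "q * s = \<tau> * q ^ Suc n"
    using assms(1) by auto
  then show ?thesis using Fin by (metis qlattice.simps(1) rangeI)
next
  case (Inf \<tau>)
  then obtain n where "q * s = \<tau> * q powi (n + 1)"
    using assms by (auto simp: power_int_add_1')
  then show ?thesis using Inf by (metis qlattice.simps(2) rangeI)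
qed

lemma qlattice_nonzero:
  "s \<in> qlattice q e \<Longrightarrow> q \<noteq> 0 \<Longrightarrow> endpt_base e \<noteq> 0 \<Longrightarrow> s \<noteq> 0"
  by (cases e) auto

lemma mult_suminf_telescope:
  fixes X h :: "nat \<Rightarrow> 'a::real_normed_field"
  assumes "c \<noteq> 0" "X \<longlonglongrightarrow> L" "\<And>n. c * h n = X n - X (Suc n)"
  shows "c * suminf h = X 0 - L"
proof -
  have "(\<lambda>n. c * h n) sums (X 0 - L)"
    using telescope_sums'[OF assms(2)] assms(3) by simp
  then have "h sums ((X 0 - L) / c)"
    using assms(1) by (rule sums_mult_D)
  then show ?thesis
    using assms(1) by (simp add: sums_iff)
qed

lemma jint_q_difference:
  assumes "q \<noteq> 0" "q \<noteq> 1" "bdefined q F e"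
    and diff: "\<forall>s\<in>qlattice q e. (1 - q) * (g s * s) = F s - F (q * s)"
  shows "jint q g e = bval q F e"
proof -
  have to_zero: "(1 - q) * (\<Sum>n. g (\<tau> * q ^ n) * (\<tau> * q ^ n)) = F \<tau> - lim (\<lambda>n. F (\<tau> * q ^ n))"
    if "\<forall>n. \<tau> * q ^ n \<in> qlattice q e" "convergent (\<lambda>n. F (\<tau> * q ^ n))" for \<tau>
  proof -
    have "(1 - q) * (g (\<tau> * q ^ n) * (\<tau> * q ^ n)) = F (\<tau> * q ^ n) - F (\<tau> * q ^ Suc n)" for n
      using diff that(1) mult.left_commute[of q \<tau>] by (metis power_Suc)
    then show ?thesis
      using mult_suminf_telescope[of "1 - q" "\<lambda>n. F (\<tau> * q ^ n)"] that(2) assms(2)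
      by (simp add: convergent_LIMSEQ_iff)
  qed
  show ?thesis
  proof (cases e)
    case (Fin \<tau>)
    then show ?thesis using to_zero[of \<tau>] base_power_in_qlattice[of e] assms(3) by simp
  next
    case (Inf \<tau>)
    have "\<tau> * q powi (- int (Suc n)) = \<tau> / q ^ Suc n" for n
      by (simp only: power_int_minus power_int_of_nat divide_inverse)
    then have lattice: "\<tau> / q ^ Suc n \<in> qlattice q e" for n
      using Inf by (metis qlattice.simps(2) rangeI)
    have "(1 - q) * (g (\<tau> / q ^ Suc n) * (\<tau> / q ^ Suc n)) = F (\<tau> / q ^ Suc n) - F (\<tau> / q ^ n)" for n
    proof -
      have "q * (\<tau> / q ^ Suc n) = \<tau> / q ^ n"
        using assms(1) by simp
      then show ?thesis using diff lattice by metis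
    qed
    moreover have "(\<lambda>n. - F (\<tau> / q ^ n)) \<longlonglongrightarrow> - lim (\<lambda>n. F (\<tau> / q ^ n))"
      using assms(3) Inf by (simp add: convergent_LIMSEQ_iff tendsto_minus)
    ultimately have "(1 - q) * (\<Sum>n. g (\<tau> / q ^ Suc n) * (\<tau> / q ^ Suc n))
        = lim (\<lambda>n. F (\<tau> / q ^ n)) - F \<tau>"
      using mult_suminf_telescope[where X = "\<lambda>n. - F (\<tau> / q ^ n)"
          and h = "\<lambda>n. g (\<tau> / q ^ Suc n) * (\<tau> / q ^ Suc n)"] assms(2)
      by simp
    then show ?thesis
      using to_zero[of \<tau>] base_power_in_qlattice[of e] assms(3) Inf by (simp add: distrib_left)
  qed
qed

lemma jconvP_add:
  "jconvP q f C \<Longrightarrow> jconvP q g C \<Longrightarrow> jconvP q (\<lambda>s. f s + g s) C"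
  unfolding jconvP_def by (fastforce intro: jconv_add)

lemma jintP_add:
  "jconvP q f C \<Longrightarrow> jconvP q g C \<Longrightarrow> jintP q (\<lambda>s. f s + g s) C = jintP q f C + jintP q g C"
  by (induction C) (auto simp: jintP_def jconvP_def jint_add distrib_left)

lemma jconvP_cmult:
  "jconvP q f C \<Longrightarrow> jconvP q (\<lambda>s. a * f s) C"
  by (auto simp: jconvP_def jconv_cmult)

lemma jintP_cmult:
  "jconvP q f C \<Longrightarrow> jintP q (\<lambda>s. a * f s) C = a * jintP q f C"
  by (induction C) (auto simp: jintP_def jconvP_def jint_cmult algebra_simps)

lemma jconvP_sum:
  "finite K \<Longrightarrow> \<forall>k\<in>K. jconvP q (f k) C \<Longrightarrow> jconvP q (\<lambda>s. \<Sum>k\<in>K. f k s) C"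
  unfolding jconvP_def by (fastforce intro: jconv_sum)

lemma jintP_sum:
  "finite K \<Longrightarrow> \<forall>k\<in>K. jconvP q (f k) C \<Longrightarrow>
    jintP q (\<lambda>s. \<Sum>k\<in>K. f k s) C = (\<Sum>k\<in>K. jintP q (f k) C)"
  by (induction C) (auto simp: jintP_def jconvP_def jint_sum sum.distrib sum_distrib_left)

lemma jintP_q_difference:
  assumes "q \<noteq> 0" "q \<noteq> 1" "bdefP q F C"
    and "\<forall>(c, e)\<in>set C. \<forall>s\<in>qlattice q e. (1 - q) * (g s * s) = F s - F (q * s)"
  shows "jintP q g C = bdryP q F C"
  using assms(3,4)
  by (induction C) (auto simp: jintP_def bdryP_def bdefP_def jint_q_difference[OF assms(1,2)])

lemma sum_blocks_div_mod:
  fixes h :: "nat \<Rightarrow> nat \<Rightarrow> 'a::comm_monoid_add"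
  shows "(\<Sum>c<M * N. h (c div M) (c mod M)) = (\<Sum>i<N. \<Sum>m<M. h i m)"
proof -
  have "(\<Sum>c\<in>{i * M..<i * M + M}. h (c div M) (c mod M)) = (\<Sum>m<M. h i m)" for i
    using sum.shift_bounds_nat_ivl[of "\<lambda>c. h (c div M) (c mod M)" 0 "i * M" M]
    by (cases "M = 0") (auto simp: lessThan_atLeast0 add.commute intro!: sum.cong)
  then show ?thesis
    using sum.nat_group[of "\<lambda>c. h (c div M) (c mod M)" M N] by (simp add: mult.commute)
qed

lemma mat_mult_vec_nth:
  "i < n \<Longrightarrow> dim_vec v = n \<Longrightarrow> (mat n n f *\<^sub>v v) $ i = (\<Sum>c<n. f (i, c) * v $ c)"
  by (simp add: mult_mat_vec_def scalar_prod_def atLeast0LessThan)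

lemma Smat_mult_vec_nth:
  assumes "r < M * N" "dim_vec v = M * N"
  shows "((x \<cdot>\<^sub>m 1\<^sub>m (M * N) - Smat M N t) *\<^sub>v v) $ r = (x - t (r div M)) * v $ r"
proof -
  have "x \<cdot>\<^sub>m 1\<^sub>m (M * N) - Smat M N t = mat (M * N) (M * N) (\<lambda>(r, c). if r = c then x - t (r div M) else 0)"
    by (rule eq_matI) (auto simp: Smat_def)
  then show ?thesis
    using assms(1) by (simp add: mat_mult_vec_nth[OF assms] if_distrib[of "\<lambda>a. a * _"] cong: if_cong)
qed

lemma Smat_mult_vec_eqI:
  fixes d w :: "complex vec"
  assumes "dim_vec d = M * N" "dim_vec w = M * N" "\<And>r. r < M * N \<Longrightarrow> (x - t (r div M)) * d $ r = w $ r"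
  shows "(x \<cdot>\<^sub>m 1\<^sub>m (M * N) - Smat M N t) *\<^sub>v d = w"
proof (rule eq_vecI)
  fix r assume "r < dim_vec w"
  then show "((x \<cdot>\<^sub>m 1\<^sub>m (M * N) - Smat M N t) *\<^sub>v d) $ r = w $ r"
    using assms by (simp add: Smat_mult_vec_nth)
qed (simp add: assms(2) Smat_def)

lemma Bbig_mult_vec_nth:
  "r < M * N \<Longrightarrow> dim_vec v = M * N \<Longrightarrow>
    (Bbig M N B *\<^sub>v v) $ r = (\<Sum>c<M * N. B (c div M) $$ (r mod M, c mod M) * v $ c)"
  unfolding Bbig_def by (simp only: mat_mult_vec_nth) simp

lemma Bbig_lamb_eq:
  "qlam \<cdot>\<^sub>m Bbig M N B + lamb \<cdot>\<^sub>m 1\<^sub>m (M * N) = mat (M * N) (M * N)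
     (\<lambda>(r, c). qlam * B (c div M) $$ (r mod M, c mod M) + (if r = c then lamb else 0))"
  by (rule eq_matI) (auto simp: Bbig_def)

lemma Bbig_lamb_mult_vec_nth:
  assumes "r < M * N" "dim_vec v = M * N"
  shows "((qlam \<cdot>\<^sub>m Bbig M N B + lamb \<cdot>\<^sub>m 1\<^sub>m (M * N)) *\<^sub>v v) $ r
    = qlam * (Bbig M N B *\<^sub>v v) $ r + lamb * v $ r"
  using assms(1) unfolding Bbig_lamb_eq mat_mult_vec_nth[OF assms] Bbig_mult_vec_nth[OF assms]
  by (simp add: distrib_right sum.distrib sum_distrib_left mult.assoc if_distrib[of "\<lambda>a. a * _"] cong: if_cong)

lemma Gmat_mult_vec_nth:
  assumes "r < M * N" "dim_vec v = M * N"
  shows "(Gmat M N B qlam lamb i *\<^sub>v v) $ r =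
    (if r div M = i then ((qlam \<cdot>\<^sub>m Bbig M N B + lamb \<cdot>\<^sub>m 1\<^sub>m (M * N)) *\<^sub>v v) $ r else 0)"
  unfolding Gmat_def Bbig_lamb_eq mat_mult_vec_nth[OF assms] by simp

lemma sum_Gmat_mult_vec_nth:
  assumes "r < M * N" "dim_vec v = M * N"
  shows "(\<Sum>i<N. (Gmat M N B qlam lamb i *\<^sub>v v) $ r / (x - t i))
    = ((qlam \<cdot>\<^sub>m Bbig M N B + lamb \<cdot>\<^sub>m 1\<^sub>m (M * N)) *\<^sub>v v) $ r / (x - t (r div M))"
proof -
  have "r div M < N"
    using assms(1) by (simp add: less_mult_imp_div_less mult.commute)
  then show ?thesis
    by (simp add: Gmat_mult_vec_nth[OF assms(1,2)] if_distrib[of "\<lambda>z. z / _"] sum.delta' cong: if_cong)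
qed

lemma dim_Y0vec [simp]: "dim_vec (Y0vec M N t y s) = M * N"
  by (simp add: Y0vec_def)

lemma Smat_mult_Y0vec:
  assumes "r < M * N" "z \<noteq> t (r div M)"
  shows "((z \<cdot>\<^sub>m 1\<^sub>m (M * N) - Smat M N t) *\<^sub>v Y0vec M N t y z) $ r = y z $ (r mod M)"
  using assms by (simp add: Smat_mult_vec_nth Y0vec_def)

lemma Bbig_mult_Y0vec:
  assumes "r < M * N" "\<forall>i<N. B i \<in> carrier_mat M M" "dim_vec (y s) = M"
  shows "(Bbig M N B *\<^sub>v Y0vec M N t y s) $ r = (\<Sum>i<N. (B i *\<^sub>v y s) $ (r mod M) / (s - t i))"
proof -
  have "(Bbig M N B *\<^sub>v Y0vec M N t y s) $ r
      = (\<Sum>c<M * N. B (c div M) $$ (r mod M, c mod M) * (y s $ (c mod M) / (s - t (c div M))))"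
    using assms(1) by (simp add: Bbig_mult_vec_nth Y0vec_def)
  also have "\<dots> = (\<Sum>i<N. \<Sum>m<M. B i $$ (r mod M, m) * y s $ m / (s - t i))"
    by (simp add: sum_blocks_div_mod[where h = "\<lambda>i m. B i $$ (r mod M, m) * y s $ m / (s - t i)",
          symmetric])
  also have "\<dots> = (\<Sum>i<N. (B i *\<^sub>v y s) $ (r mod M) / (s - t i))"
    using assms by (cases "M = 0")
      (auto simp: mult_mat_vec_def scalar_prod_def atLeast0LessThan sum_divide_distrib intro!: sum.cong)
  finally show ?thesis .
qed

lemma kernel_ratio_identity:
  fixes q qlam x s t0 :: complex
  assumes "q \<noteq> 1" "qlam \<noteq> 0" "x \<noteq> 0" "s \<noteq> x"
  defines "\<rho> \<equiv> (1 - s / (qlam * x)) / (1 - s / x)"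
    and "A \<equiv> (x - t0) / ((1 - q) * x)"
  shows "(1 - q) * s * (((1 - qlam) / (1 - q) - A) / qlam + A * \<rho>) = (\<rho> - 1) * (s - t0)"
proof -
  define d where "d = 1 - q"
  have "d \<noteq> 0" "x - s \<noteq> 0"
    using assms(1,4) by (auto simp: d_def)
  moreover have \<rho>: "\<rho> = (qlam * x - s) / (qlam * (x - s))"
    unfolding \<rho>_def using assms(2,3) \<open>x - s \<noteq> 0\<close> by (simp add: field_simps)
  ultimately show ?thesis
    unfolding A_def d_def[symmetric] \<rho> using assms(2,3) by (simp add: field_simps) algebra
qed

(* Up to the factor -q^lambda x^lambda, the bracket is the integrand of the j-th row of
   (x I - S) D_x Y - (q^lambda B + [lambda] I) Y. *)
lemma Y0vec_kernel_q_difference: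
  fixes q qlam x s :: complex and M N j :: nat and t :: "nat \<Rightarrow> complex"
    and B :: "nat \<Rightarrow> complex mat" and y :: "complex \<Rightarrow> complex vec"
  assumes q: "cmod q < 1" "q \<noteq> 0" and qlam: "qlam \<noteq> 0" and x: "x \<noteq> 0" and s: "s \<noteq> 0"
    and j: "j < M * N" and B: "\<forall>i<N. B i \<in> carrier_mat M M" and ydim: "dim_vec (y s) = M"
    and s_t: "\<forall>i<N. s \<noteq> t i" and qs_t: "\<forall>i<N. q * s \<noteq> t i" and qpoch: "qpoch q (s / x) \<noteq> 0"
    and y_eq: "\<forall>k<M. (y s $ k - y (q * s) $ k) / ((1 - q) * s) = (\<Sum>i<N. (B i *\<^sub>v y s) $ k / (s - t i))"
  defines "F \<equiv> \<lambda>s. (1 - s / (qlam * x)) / (1 - s / x)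
      * ((s \<cdot>\<^sub>m 1\<^sub>m (M * N) - Smat M N t) *\<^sub>v Y0vec M N t y s) $ j * qPhi q qlam s x"
    and "A \<equiv> (x - t (j div M)) / ((1 - q) * x)"
  shows "(1 - q) * (((\<Sum>c<M * N. B (c div M) $$ (j mod M, c mod M) * (Y0vec M N t y s $ c * qPhi q qlam s x))
      + ((1 - qlam) / (1 - q) - A) / qlam * (Y0vec M N t y s $ j * qPhi q qlam s x)
      + A * (Y0vec M N t y s $ j * qPhi q qlam s (q * x))) * s)
    = F s - F (q * s)"
proof -
  define k where "k = j mod M"
  define t0 where "t0 = t (j div M)"
  define \<Phi> where "\<Phi> = qPhi q qlam s x"
  define \<rho> where "\<rho> = (1 - s / (qlam * x)) / (1 - s / x)"
  have "M > 0" using j by (cases M) auto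
  then have k: "k < M" by (simp add: k_def)
  have i0: "j div M < N" using j by (simp add: less_mult_imp_div_less mult.commute)
  have q1: "q \<noteq> 1" using q(1) by auto
  have "s \<noteq> x"
    using qpoch qpoch_shift[OF q(1), of "s / x"] x by auto
  have Y0_j: "Y0vec M N t y s $ j = y s $ k / (s - t0)"
    using j by (simp add: Y0vec_def k_def t0_def)
  have sum: "(\<Sum>c<M * N. B (c div M) $$ (j mod M, c mod M) * (Y0vec M N t y s $ c * \<Phi>))
      = \<Phi> * ((y s $ k - y (q * s) $ k) / ((1 - q) * s))"
    using Bbig_mult_vec_nth[OF j dim_Y0vec, of B t y s] Bbig_mult_Y0vec[of j M N B y s t] j B ydim y_eq k
    by (simp add: k_def sum_distrib_left algebra_simps)
  have F_s: "F s = \<rho> * y s $ k * \<Phi>"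
    using Smat_mult_Y0vec[OF j] s_t i0 by (simp add: F_def \<rho>_def \<Phi>_def k_def)
  have "F (q * s) = y (q * s) $ k * (qPhi q qlam (q * s) x * ((1 - q * s / (qlam * x)) / (1 - q * s / x)))"
    using Smat_mult_Y0vec[OF j] qs_t i0 by (simp add: F_def k_def)
  then have F_qs: "F (q * s) = y (q * s) $ k * \<Phi>"
    unfolding qPhi_shift_t[OF q(1) qpoch] \<Phi>_def .
  have ratio: "(1 - q) * s * (((1 - qlam) / (1 - q) - A) / qlam + A * \<rho>) = (\<rho> - 1) * (s - t0)"
    unfolding A_def \<rho>_def t0_def using kernel_ratio_identity[OF q1 qlam x \<open>s \<noteq> x\<close>] .
  have "s - t0 \<noteq> 0"
    using s_t i0 by (simp add: t0_def)
  have "d * ((\<Phi> * (\<Delta> / (d * s)) + a * (Y / u * \<Phi>) + A * (Y / u * (\<Phi> * \<rho>))) * s)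
      = \<Phi> * \<Delta> + \<Phi> * Y / u * (d * s * (a + A * \<rho>))"
    if "d \<noteq> 0" "u \<noteq> 0" for d u a Y \<Delta> :: complex
    using that s by (simp add: field_simps)
  note expand = this[OF _ \<open>s - t0 \<noteq> 0\<close>]
  have "(1 - q) * ((\<Phi> * ((y s $ k - y (q * s) $ k) / ((1 - q) * s))
        + ((1 - qlam) / (1 - q) - A) / qlam * (y s $ k / (s - t0) * \<Phi>)
        + A * (y s $ k / (s - t0) * (\<Phi> * \<rho>))) * s)
      = \<Phi> * (y s $ k - y (q * s) $ k)
        + \<Phi> * y s $ k / (s - t0) * ((1 - q) * s * (((1 - qlam) / (1 - q) - A) / qlam + A * \<rho>))"
    by (rule expand) (use q1 in simp)
  also have "\<dots> = F s - F (q * s)"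
    unfolding ratio F_s F_qs using \<open>s - t0 \<noteq> 0\<close> by (simp add: field_simps)
  finally show ?thesis
    unfolding sum Y0_j qPhi_scale_x[OF q(1) q(2) x qlam qpoch] \<Phi>_def[symmetric] \<rho>_def[symmetric] .
qed

lemma qEuler_Y0vec_row_equation:
  fixes q qlam x :: complex and M N j :: nat and t :: "nat \<Rightarrow> complex"
    and B :: "nat \<Rightarrow> complex mat" and y :: "complex \<Rightarrow> complex vec" and xl :: "complex \<Rightarrow> complex"
    and C :: qpath
  defines "F \<equiv> \<lambda>s. (1 - s / (qlam * x)) / (1 - s / x)
      * ((s \<cdot>\<^sub>m 1\<^sub>m (M * N) - Smat M N t) *\<^sub>v Y0vec M N t y s) $ j * qPhi q qlam s x"
    and "Y \<equiv> \<lambda>z. vec (M * N) (\<lambda>c. qEuler q qlam xl C (\<lambda>s. Y0vec M N t y s $ c) z)"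
  assumes q: "cmod q < 1" "q \<noteq> 0" and qlam: "qlam \<noteq> 0" and x: "x \<noteq> 0"
    and xl: "xl (q * x) = qlam * xl x"
    and j: "j < M * N" and B: "\<forall>i<N. B i \<in> carrier_mat M M" and ydim: "\<forall>s. dim_vec (y s) = M"
    and y_sol: "\<forall>s. s \<noteq> 0 \<and> (\<forall>i<N. s \<noteq> t i) \<longrightarrow>
        (\<forall>k<M. (y s $ k - y (q * s) $ k) / ((1 - q) * s) = (\<Sum>i<N. (B i *\<^sub>v y s) $ k / (s - t i)))"
    and C_nonzero: "\<forall>(c, e) \<in> set C. endpt_base e \<noteq> 0"
    and C_avoid: "\<forall>(c, e) \<in> set C. \<forall>s \<in> qlattice q e. (\<forall>i<N. s \<noteq> t i) \<and> qpoch q (s / x) \<noteq> 0"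
    and conv: "\<forall>c<M * N. jconvP q (\<lambda>s. Y0vec M N t y s $ c * qPhi q qlam s x) C"
    and conv_qx: "jconvP q (\<lambda>s. Y0vec M N t y s $ j * qPhi q qlam s (q * x)) C"
    and bdry: "bdefP q F C" "bdryP q F C = 0"
  shows "(x - t (j div M)) * ((Y x $ j - Y (q * x) $ j) / ((1 - q) * x))
    = ((qlam \<cdot>\<^sub>m Bbig M N B + (1 - qlam) / (1 - q) \<cdot>\<^sub>m 1\<^sub>m (M * N)) *\<^sub>v Y x) $ j"
proof -
  define A where "A = (x - t (j div M)) / ((1 - q) * x)"
  define lamb where "lamb = (1 - qlam) / (1 - q)"
  define a where "a = (lamb - A) / qlam"
  define w where "w c = B (c div M) $$ (j mod M, c mod M)" for c
  define f where "f = (\<lambda>c s. Y0vec M N t y s $ c * qPhi q qlam s x)"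
  define f\<^sub>q where "f\<^sub>q = (\<lambda>s. Y0vec M N t y s $ j * qPhi q qlam s (q * x))"
  define J where "J c = jintP q (f c) C" for c
  have "(1 - q) * (((\<Sum>c<M * N. w c * f c s) + a * f j s + A * f\<^sub>q s) * s) = F s - F (q * s)"
    if ce: "(c, e) \<in> set C" and s: "s \<in> qlattice q e" for c e s
  proof -
    have "s \<noteq> 0"
      using qlattice_nonzero[OF s q(2)] C_nonzero ce by auto
    moreover have "\<forall>i<N. s \<noteq> t i" "\<forall>i<N. q * s \<noteq> t i" "qpoch q (s / x) \<noteq> 0"
      using C_avoid ce s q_mult_in_qlattice[OF s q(2)] by fastforce+
    ultimately show ?thesis
      unfolding F_def A_def a_def lamb_def w_def f_def f\<^sub>q_def
      using Y0vec_kernel_q_difference[OF q qlam x _ j B] y_sol ydim by blast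
  qed
  then have "jintP q (\<lambda>s. (\<Sum>c<M * N. w c * f c s) + a * f j s + A * f\<^sub>q s) C = bdryP q F C"
    using q(1) by (intro jintP_q_difference[OF q(2) _ bdry(1)]) auto
  moreover have "jintP q (\<lambda>s. (\<Sum>c<M * N. w c * f c s) + a * f j s + A * f\<^sub>q s) C
      = (\<Sum>c<M * N. w c * J c) + a * J j + A * jintP q f\<^sub>q C"
    using conv conv_qx j
    by (simp add: J_def f_def f\<^sub>q_def jintP_add jintP_sum jintP_cmult jconvP_add jconvP_sum jconvP_cmult)
  ultimately have combination: "A * (J j - qlam * jintP q f\<^sub>q C) = qlam * (\<Sum>c<M * N. w c * J c) + lamb * J j"
    using bdry(2) qlam by (simp add: a_def field_simps)
  have dim_Y: "dim_vec (Y x) = M * N"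
    by (simp add: Y_def)
  have Y_x: "Y x $ c = xl x * J c" if "c < M * N" for c
    using that by (simp add: Y_def qEuler_def J_def f_def)
  have Y_qx: "Y (q * x) $ j = qlam * xl x * jintP q f\<^sub>q C"
    using j by (simp add: Y_def qEuler_def f\<^sub>q_def xl)
  have "(x - t (j div M)) * ((Y x $ j - Y (q * x) $ j) / ((1 - q) * x))
      = xl x * (A * (J j - qlam * jintP q f\<^sub>q C))"
    unfolding Y_x[OF j] Y_qx A_def by (simp add: algebra_simps)
  also have "\<dots> = xl x * (qlam * (\<Sum>c<M * N. w c * J c) + lamb * J j)"
    by (simp only: combination)
  also have "\<dots> = ((qlam \<cdot>\<^sub>m Bbig M N B + lamb \<cdot>\<^sub>m 1\<^sub>m (M * N)) *\<^sub>v Y x) $ j"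
    unfolding Bbig_lamb_mult_vec_nth[OF j dim_Y] Bbig_mult_vec_nth[OF j dim_Y]
    using j by (simp add: Y_x w_def sum_distrib_left algebra_simps)
  finally show ?thesis
    unfolding lamb_def .
qed

theorem mainTheorem3:
  fixes q lq lam qlam x :: complex and M N :: nat
    and t :: "nat \<Rightarrow> complex" and B :: "nat \<Rightarrow> complex mat"
    and y :: "complex \<Rightarrow> complex vec" and xl :: "complex \<Rightarrow> complex"
    and C :: qpath
  assumes q: "0 < cmod q" "cmod q < 1"
    and lq: "exp lq = q" and qlam: "qlam = exp (lam * lq)"
    and xl_branch: "\<forall>z. z \<noteq> 0 \<longrightarrow> (\<exists>l. exp l = z \<and> xl z = exp (lam * l))"
    and xl_shift: "\<forall>z. z \<noteq> 0 \<longrightarrow> xl (q * z) = qlam * xl z"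
    and t_distinct: "inj_on t {..<N}"
    and B: "\<forall>i<N. B i \<in> carrier_mat M M"
    and ydim: "\<forall>s. dim_vec (y s) = M"
    and y_sol: "\<forall>s. s \<noteq> 0 \<and> (\<forall>i<N. s \<noteq> t i) \<longrightarrow>
        (\<forall>k<M. (y s $ k - y (q * s) $ k) / ((1 - q) * s) = (\<Sum>i<N. (B i *\<^sub>v y s) $ k / (s - t i)))"
    and x: "x \<noteq> 0"
    and C_nonzero: "\<forall>(c, e) \<in> set C. endpt_base e \<noteq> 0"
    and C_avoid: "\<forall>(c, e) \<in> set C. \<forall>s \<in> qlattice q e. (\<forall>i<N. s \<noteq> t i) \<and> qpoch q (s / x) \<noteq> 0"
    and conv: "\<forall>j<M * N.
        jconvP q (\<lambda>s. Y0vec M N t y s $ j * qPhi q qlam s x) C \<and>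
        jconvP q (\<lambda>s. Y0vec M N t y s $ j * qPhi q qlam s (q * x)) C"
    and bdry: "\<forall>j<M * N.
        bdefP q (\<lambda>s. ((1 - s / (qlam * x)) / (1 - s / x)
            * ((s \<cdot>\<^sub>m 1\<^sub>m (M * N) - Smat M N t) *\<^sub>v Y0vec M N t y s) $ j * qPhi q qlam s x)) C \<and>
        bdryP q (\<lambda>s. ((1 - s / (qlam * x)) / (1 - s / x)
            * ((s \<cdot>\<^sub>m 1\<^sub>m (M * N) - Smat M N t) *\<^sub>v Y0vec M N t y s) $ j * qPhi q qlam s x)) C = 0"
  shows "let Y = (\<lambda>z. vec (M * N) (\<lambda>j. qEuler q qlam xl C (\<lambda>s. Y0vec M N t y s $ j) z));
             DY = (1 / ((1 - q) * x)) \<cdot>\<^sub>v (Y x - Y (q * x));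
             lamb = (1 - qlam) / (1 - q)
         in (x \<cdot>\<^sub>m 1\<^sub>m (M * N) - Smat M N t) *\<^sub>v DY
              = (qlam \<cdot>\<^sub>m Bbig M N B + lamb \<cdot>\<^sub>m 1\<^sub>m (M * N)) *\<^sub>v Y x
            \<and> ((\<forall>i<N. x \<noteq> t i) \<longrightarrow>
                (\<forall>r<M * N. DY $ r = (\<Sum>i<N. (Gmat M N B qlam lamb i *\<^sub>v Y x) $ r / (x - t i))))"
proof -
  \<comment> \<open>Distinctness of the t_i and the branch of x^lambda play no role;
    only x^lambda(q x) = q^lambda x^lambda is used.\<close>
  define lamb where "lamb = (1 - qlam) / (1 - q)"
  define R where "R = qlam \<cdot>\<^sub>m Bbig M N B + lamb \<cdot>\<^sub>m 1\<^sub>m (M * N)"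
  define Y where "Y = (\<lambda>z. vec (M * N) (\<lambda>j. qEuler q qlam xl C (\<lambda>s. Y0vec M N t y s $ j) z))"
  define DY where "DY = (1 / ((1 - q) * x)) \<cdot>\<^sub>v (Y x - Y (q * x))"
  have dim_Y: "dim_vec (Y z) = M * N" for z
    by (simp add: Y_def)
  have row: "(x - t (r div M)) * DY $ r = (R *\<^sub>v Y x) $ r"
    if r: "r < M * N" for r
    using qEuler_Y0vec_row_equation[OF q(2) _ _ x _ r B ydim y_sol C_nonzero C_avoid] conv bdry r
      q qlam xl_shift x
    by (simp add: DY_def Y_def R_def lamb_def dim_Y)
  have "(x \<cdot>\<^sub>m 1\<^sub>m (M * N) - Smat M N t) *\<^sub>v DY = R *\<^sub>v Y x"
    using row by (intro Smat_mult_vec_eqI) (simp_all add: DY_def dim_Y R_def Bbig_def)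
  moreover have "DY $ r = (\<Sum>i<N. (Gmat M N B qlam lamb i *\<^sub>v Y x) $ r / (x - t i))"
    if "\<forall>i<N. x \<noteq> t i" "r < M * N" for r
  proof -
    have "x - t (r div M) \<noteq> 0"
      using that by (simp add: less_mult_imp_div_less mult.commute)
    then show ?thesis
      using row[OF that(2)] unfolding sum_Gmat_mult_vec_nth[OF that(2) dim_Y] R_def[symmetric]
      by (simp add: field_simps)
  qed
  ultimately show ?thesis
    unfolding Let_def Y_def[symmetric] DY_def[symmetric] lamb_def[symmetric] R_def[symmetric] by blast
qed

end
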